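(* Let $G$ be a simple graph on $[n]$ and let $G^*$ be its associated directed graph. Then $G$ is closed with respect to the given labeling if and only if for any two vertices $i\neq j$ of $G^*$, all paths of shortest length from $i$ to $j$ are directed.
   Context: $G$ is closed with respect to the given labeling if for all distinct edges $\{i,j\}$ and $\{k,l\}$ of $G$ with $i<j$ and $k<l$ one has $\{j,l\}\in E(G)$ whenever $i=k$, and $\{i,k\}\in E(G)$ whenever $j=l$. The associated directed graph $G^*$ has vertex set $[n]$ and an arrow $(i,j)$ whenever $\{i,j\}\in E(G)$ and $i<j$. A path from $v$ to $w$ is a sequence of vertices $v=v_0,v_1,\ldots,v_l=w$ such that each $\{v_k,v_{k+1}\}$ is an edge of the underlying graph; in $G^*$ such a path is called directed if either $(v_k,v_{k+1})$ is an arrow for all $k$, or $(v_{k+1},v_k)$ is an arrow for all $k$. *)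

theory Defs
  imports Main
begin

definition simple_graph_on :: "nat \<Rightarrow> nat set set \<Rightarrow> bool" where
  "simple_graph_on n E \<longleftrightarrow>
     (\<forall>e\<in>E. \<exists>i j. e = {i, j} \<and> i \<noteq> j \<and> i \<in> {1..n} \<and> j \<in> {1..n})"

definition closed_graph :: "nat set set \<Rightarrow> bool" where
  "closed_graph E \<longleftrightarrow>
     (\<forall>i j k l. {i, j} \<in> E \<and> {k, l} \<in> E \<and> {i, j} \<noteq> {k, l} \<and> i < j \<and> k < l \<longrightarrow>
        (i = k \<longrightarrow> {j, l} \<in> E) \<and> (j = l \<longrightarrow> {i, k} \<in> E))"

definition arrows :: "nat set set \<Rightarrow> (nat \<times> nat) set" where
  "arrows E = {(i, j). {i, j} \<in> E \<and> i < j}"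

definition is_path :: "nat set set \<Rightarrow> nat list \<Rightarrow> nat \<Rightarrow> nat \<Rightarrow> bool" where
  "is_path E vs v w \<longleftrightarrow> vs \<noteq> [] \<and> hd vs = v \<and> last vs = w \<and>
     (\<forall>k < length vs - 1. {vs ! k, vs ! (k + 1)} \<in> E)"

definition directed_path :: "nat set set \<Rightarrow> nat list \<Rightarrow> bool" where
  "directed_path E vs \<longleftrightarrow>
     (\<forall>k < length vs - 1. (vs ! k, vs ! (k + 1)) \<in> arrows E) \<or>
     (\<forall>k < length vs - 1. (vs ! (k + 1), vs ! k) \<in> arrows E)"

definition shortest_path :: "nat set set \<Rightarrow> nat list \<Rightarrow> nat \<Rightarrow> nat \<Rightarrow> bool" where
  "shortest_path E vs v w \<longleftrightarrow> is_path E vs v w \<and>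
     (\<forall>ws. is_path E ws v w \<longrightarrow> length vs \<le> length ws)"

end

theory Submission
  imports Defs
begin

text \<open>A shortest path never contains a detour \<open>x, y, z\<close> with \<open>x = z\<close> or \<open>{x, z}\<close> an edge.
  In a closed graph two neighbours of \<open>y\<close> lying on the same side of \<open>y\<close> are adjacent, so along
  a shortest path the labels can never turn around: the path is monotone, i.e. directed.
  Conversely, if \<open>a\<close> and \<open>b\<close> are non-adjacent neighbours of \<open>m\<close> on the same side of \<open>m\<close>, then
  \<open>a, m, b\<close> is a shortest path which is not directed.\<close>

lemma closed_graph_iff_same_side_neighbours_adjacent:
  "closed_graph E \<longleftrightarrow>
     (\<forall>m a b. {m, a} \<in> E \<longrightarrow> {m, b} \<in> E \<longrightarrow> a \<noteq> b \<longrightarrow>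
        (m < a \<and> m < b) \<or> (a < m \<and> b < m) \<longrightarrow> {a, b} \<in> E)"
  (is "_ \<longleftrightarrow> ?same_side")
proof
  assume closed: "closed_graph E"
  show ?same_side
  proof (intro allI impI)
    fix m a b
    assume edges: "{m, a} \<in> E" "{m, b} \<in> E" and "a \<noteq> b"
      and side: "(m < a \<and> m < b) \<or> (a < m \<and> b < m)"
    have "{m, a} \<noteq> {m, b}" "{a, m} \<noteq> {b, m}"
      using \<open>a \<noteq> b\<close> by (auto simp: doubleton_eq_iff)
    moreover have "{a, m} \<in> E" "{b, m} \<in> E"
      using edges by (simp_all add: insert_commute)
    ultimately show "{a, b} \<in> E"
      using side edges closed[unfolded closed_graph_def, rule_format, of m a m b]
        closed[unfolded closed_graph_def, rule_format, of a m b m]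
      by blast
  qed
next
  assume same_side: ?same_side
  show "closed_graph E"
    unfolding closed_graph_def
  proof (intro allI impI)
    fix i j k l
    assume "{i, j} \<in> E \<and> {k, l} \<in> E \<and> {i, j} \<noteq> {k, l} \<and> i < j \<and> k < l"
    then show "(i = k \<longrightarrow> {j, l} \<in> E) \<and> (j = l \<longrightarrow> {i, k} \<in> E)"
      using same_side[rule_format, of i j l] same_side[rule_format, of j i k]
      by (auto simp: insert_commute)
  qed
qed

lemma is_path_iff_successively:
  "is_path E vs v w \<longleftrightarrow>
     vs \<noteq> [] \<and> hd vs = v \<and> last vs = w \<and> successively (\<lambda>a b. {a, b} \<in> E) vs"
  unfolding is_path_def successively_conv_nth by (auto simp: less_diff_conv)

lemma directed_path_iff_successively:
  "directed_path E vs \<longleftrightarrow>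
     successively (\<lambda>a b. (a, b) \<in> arrows E) vs \<or> successively (\<lambda>a b. (b, a) \<in> arrows E) vs"
  unfolding directed_path_def successively_conv_nth by (auto simp: less_diff_conv)

lemma directed_path_if_successively_less:
  assumes "is_path E vs v w" and "successively (<) vs \<or> successively (>) vs"
  shows "directed_path E vs"
proof -
  have edges: "successively (\<lambda>a b. {a, b} \<in> E) vs"
    using assms(1) by (simp add: is_path_iff_successively)
  have "successively (\<lambda>a b. (a, b) \<in> arrows E) vs" if "successively (<) vs"
    using that edges by (induction vs rule: induct_list012) (auto simp: arrows_def)
  moreover have "successively (\<lambda>a b. (b, a) \<in> arrows E) vs" if "successively (>) vs"
    using that edges by (induction vs rule: induct_list012) (auto simp: arrows_def insert_commute)
  ultimately show ?thesis
    using assms(2) by (auto simp: directed_path_iff_successively)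
qed

lemma successively_less_or_greater_if_no_turn:
  fixes vs :: "'a::linorder list"
  assumes "distinct_adj vs"
    and "\<And>xs x y z ys. vs = xs @ x # y # z # ys \<Longrightarrow> x < y \<longleftrightarrow> y < z"
  shows "successively (<) vs \<or> successively (>) vs"
  using assms
proof (induction vs)
  case (Cons a rest)
  have IH: "successively (<) rest \<or> successively (>) rest"
  proof (rule Cons.IH)
    show "distinct_adj rest"
      using Cons.prems(1) by (cases rest) (simp_all add: distinct_adj_Cons)
    show "x < y \<longleftrightarrow> y < z" if "rest = xs @ x # y # z # ys" for xs x y z ys
      using Cons.prems(2)[of "a # xs"] that by simp
  qed
  show ?case
  proof (cases rest rule: remdups_adj.cases)
    case (3 b c rest')
    have "a \<noteq> b"
      using Cons.prems(1) 3 by (simp add: distinct_adj_Cons)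
    moreover have "a < b \<longleftrightarrow> b < c"
      using Cons.prems(2)[of "[]"] 3 by simp
    ultimately show ?thesis
      using IH 3 by auto
  qed (use Cons.prems(1) in \<open>auto simp: distinct_adj_Cons\<close>)
qed simp

lemma shortest_path_no_shortcut:
  assumes "shortest_path E (xs @ x # y # z # ys) v w"
  shows "x \<noteq> z \<and> {x, z} \<notin> E"
proof -
  let ?vs = "xs @ x # y # z # ys"
  have path: "hd ?vs = v" "last ?vs = w" and edges: "successively (\<lambda>a b. {a, b} \<in> E) ?vs"
    using assms by (auto simp: shortest_path_def is_path_iff_successively)
  have spliced_path: "is_path E (xs @ x # us) v w"
    if "successively (\<lambda>a b. {a, b} \<in> E) (x # us)" "last (x # us) = last (z # ys)" for us
    using path edges that by (auto simp: is_path_iff_successively successively_append_iff hd_append)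
  have edges_ys: "successively (\<lambda>a b. {a, b} \<in> E) (z # ys)"
    using edges by (simp add: successively_append_iff)
  have not_shorter: "\<not> is_path E ws v w" if "length ws < length ?vs" for ws
    using assms that by (auto simp: shortest_path_def)
  have "x \<noteq> z"
    using spliced_path[of ys] not_shorter[of "xs @ x # ys"] edges_ys by auto
  moreover have "{x, z} \<notin> E"
    using spliced_path[of "z # ys"] not_shorter[of "xs @ x # z # ys"] edges_ys by auto
  ultimately show ?thesis ..
qed

lemma shortest_path_directed_if_closed:
  assumes "closed_graph E" and no_loops: "\<And>x. {x} \<notin> E" and "shortest_path E vs v w"
  shows "directed_path E vs"
proof (rule directed_path_if_successively_less)
  show path: "is_path E vs v w"
    using assms(3) by (simp add: shortest_path_def)
  show "successively (<) vs \<or> successively (>) vs"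
  proof (rule successively_less_or_greater_if_no_turn)
    show "distinct_adj vs"
      unfolding distinct_adj_def
      using path no_loops
      by (auto simp: is_path_iff_successively elim!: successively_mono)
    show "x < y \<longleftrightarrow> y < z" if vs: "vs = xs @ x # y # z # ys" for xs x y z ys
    proof -
      have "{y, x} \<in> E" "{y, z} \<in> E"
        using path vs by (auto simp: is_path_iff_successively successively_append_iff insert_commute)
      moreover have "x \<noteq> y" "y \<noteq> z"
        using calculation no_loops by auto
      moreover have "x \<noteq> z" "{x, z} \<notin> E"
        using shortest_path_no_shortcut assms(3) vs by blast+
      ultimately show ?thesis
        using assms(1) unfolding closed_graph_iff_same_side_neighbours_adjacent
        by (metis linorder_neqE)
    qed
  qed
qed

lemma shortest_path_two_steps:
  assumes "{a, m} \<in> E" "{m, b} \<in> E" "a \<noteq> b" "{a, b} \<notin> E"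
  shows "shortest_path E [a, m, b] a b"
  unfolding shortest_path_def
proof (intro conjI allI impI)
  show "is_path E [a, m, b] a b"
    using assms by (simp add: is_path_iff_successively)
  fix ws
  assume "is_path E ws a b"
  with assms(3,4) show "length [a, m, b] \<le> length ws"
    by (cases ws rule: remdups_adj.cases) (auto simp: is_path_iff_successively Suc_le_eq split: if_splits)
qed

lemma simple_graph_on_edge:
  assumes "simple_graph_on n E" "{a, b} \<in> E"
  shows "a \<noteq> b" "a \<in> {1..n}" "b \<in> {1..n}"
  using assms unfolding simple_graph_on_def by (metis doubleton_eq_iff)+

theorem proposition1p4:
  fixes n :: nat and E :: "nat set set"
  assumes "simple_graph_on n E"
  shows "closed_graph E \<longleftrightarrow>
    (\<forall>i\<in>{1..n}. \<forall>j\<in>{1..n}. i \<noteq> j \<longrightarrow>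
       (\<forall>vs. shortest_path E vs i j \<longrightarrow> directed_path E vs))"
proof (intro iffI ballI impI allI)
  fix i j vs
  assume "closed_graph E" "shortest_path E vs i j"
  moreover have "\<And>x. {x} \<notin> E"
    using simple_graph_on_edge(1)[OF assms, of x x for x] by auto
  ultimately show "directed_path E vs"
    using shortest_path_directed_if_closed by blast
next
  assume shortest_directed: "\<forall>i\<in>{1..n}. \<forall>j\<in>{1..n}. i \<noteq> j \<longrightarrow>
       (\<forall>vs. shortest_path E vs i j \<longrightarrow> directed_path E vs)"
  show "closed_graph E"
    unfolding closed_graph_iff_same_side_neighbours_adjacent
  proof (intro allI impI, rule ccontr)
    fix m a b
    assume edges: "{m, a} \<in> E" "{m, b} \<in> E" and "a \<noteq> b"
      and same_side: "(m < a \<and> m < b) \<or> (a < m \<and> b < m)" and "{a, b} \<notin> E"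
    then have "shortest_path E [a, m, b] a b"
      by (intro shortest_path_two_steps) (auto simp: insert_commute)
    moreover have "a \<in> {1..n}" "b \<in> {1..n}"
      using simple_graph_on_edge[OF assms] edges by blast+
    moreover have "\<not> directed_path E [a, m, b]"
      using same_side by (auto simp: directed_path_iff_successively arrows_def)
    ultimately show False
      using shortest_directed \<open>a \<noteq> b\<close> by blast
  qed
qed

end
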